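(* Let $\lambda(x^1,x^2)$ be a smooth function on an open set $U\subset\mathbb R^2$ and let $M=\mathbb R\times U$ with coordinates $(t,x^1,x^2)$. Take the torsion-free Newton-Cartan background $\tau_\mu dx^\mu=dt$, $e_\mu{}^adx^\mu=e^{\lambda}dx^a$, $m_\mu=0$. Let $X^-_a$ be any constant unit vector, $Y^-_a=\epsilon_{ab}X^-_b$, and set $\omega_a:=2\epsilon_{ab}\,e^{-\lambda}\partial\lambda/\partial x^b$. Choose the background fields $$v=0,\qquad v_0=0,\qquad v_a=\tfrac12\omega_a,\qquad \mathrm{Re}(u)=-\tfrac12 Y^-_a\omega_a,\qquad \mathrm{Im}(u)=-\tfrac12X^-_a\omega_a .$$ Then the system (S$_-$) of Theorem 1 admits a nowhere-vanishing solution $\zeta_-$ on $M$ (and two linearly independent such solutions wherever these data give $u\equiv 0$).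
   Context: Conventions: $\tau^\mu,e^\mu{}_a$ are the projective inverses ($\tau^\mu\tau_\mu=1$, $\tau^\mu e_\mu{}^a=0$, $e^\mu{}_a\tau_\mu=0$, $e^\mu{}_ae_\mu{}^b=\delta^b_a$); $v_0=\tau^\mu v_\mu$, $v_a=e^\mu{}_av_\mu$, $v^a=v_a$. $\epsilon_{12}=\epsilon^{12}=1$. $\tau_{\mu\nu}=2\partial_{[\mu}\tau_{\nu]}$, $\tau_{ab}=e^\mu{}_ae^\nu{}_b\tau_{\mu\nu}$, $\tau_{0\mu}=\tau^\nu\tau_{\nu\mu}$, $\tau_\mu{}^a=\tau_{\mu\nu}e^{\nu a}$, $\tau_\mu{}^0=\tau_{0\mu}$. Spin connection $\omega_\mu{}^{ab} = 2e^{\nu[a}\partial_{[\mu}e_{\nu]}{}^{b]} - e_\mu{}^ce^{\nu a}e^{\rho b}\partial_{[\nu}e_{\rho]c} - \tau_\mu e^{\nu a}e^{\rho b}\partial_{[\nu}m_{\rho]}$ (for this background $e^\mu{}_a\omega_\mu{}^{bc}\epsilon_{bc}=\omega_a$). Gamma matrices: $2\times2$, $\gamma_0^2=-\mathbb1$, $\{\gamma_a,\gamma_b\}=2\delta_{ab}$, $\{\gamma_0,\gamma_a\}=0$, $\gamma^a=\gamma_a$, $\gamma^0=-\gamma_0$, $\gamma_{ab}=\epsilon_{ab}\gamma_0$, $\gamma_{a0}=\epsilon_{ab}\gamma_b$; Majorana: $\zeta^*=\mathrm i\mathcal C_3\gamma^0\zeta$, $\mathcal C_3^T=-\mathcal C_3$,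 $\gamma^T=-\mathcal C_3\gamma\mathcal C_3^{-1}$. $D_\mu\zeta=\partial_\mu\zeta+\tfrac14\omega_\mu{}^{ab}\gamma_{ab}\zeta$. System (S$_-$) for a commuting Majorana spinor $\zeta_-$: $(\tfrac43 v-\epsilon^{ab}\tau_{ab})\gamma_0\zeta_-=0$; $(\tfrac32\tau_\mu{}^a\gamma_{a0}+e_\mu{}^av\gamma_a+\tau_\mu v^a\gamma_a+\mathrm{Re}(u)\tau_\mu\gamma_0+\mathrm{Im}(u)\tau_\mu)\zeta_-=0$; $D_\mu\zeta_-=(\tfrac14\tau_\mu{}^0+\tfrac12v_\mu\gamma_0-\tfrac16e_\mu{}^av_b\gamma_a\gamma^b\gamma_0-\tfrac16\mathrm{Re}(u)e_\mu{}^a\gamma_a+\tfrac16\mathrm{Im}(u)e_\mu{}^a\gamma_{a0})\zeta_-$. *)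

theory Defs
  imports "HOL-Analysis.Analysis"
begin

definition pdir :: "('a::real_normed_vector \<Rightarrow> 'b::real_normed_vector) \<Rightarrow> 'a \<Rightarrow> 'a \<Rightarrow> 'b" where
  "pdir f b p = vector_derivative (\<lambda>s. f (p + s *\<^sub>R b)) (at 0)"

fun iter_pd :: "'a::real_normed_vector list \<Rightarrow> ('a \<Rightarrow> 'b::real_normed_vector) \<Rightarrow> 'a \<Rightarrow> 'b" where
  "iter_pd [] f = f"
| "iter_pd (b # bs) f = (\<lambda>p. pdir (iter_pd bs f) b p)"

definition smooth_on :: "'a::euclidean_space set \<Rightarrow> ('a \<Rightarrow> 'b::real_normed_vector) \<Rightarrow> bool" where
  "smooth_on S f \<longleftrightarrow> (\<forall>bs. set bs \<subseteq> Basis \<longrightarrow>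
      continuous_on S (iter_pd bs f) \<and>
      (\<forall>p\<in>S. \<forall>b\<in>Basis. (\<lambda>s. iter_pd bs f (p + s *\<^sub>R b)) differentiable (at 0)))"

section \<open>Spacetime M = R x U, coordinates (t, x^1, x^2); index 0 = t, 1 = x^1, 2 = x^2\<close>

type_synonym pt = "real \<times> real \<times> real"

definition edir :: "nat \<Rightarrow> pt" where
  "edir \<mu> = (if \<mu> = 0 then (1,0,0) else if \<mu> = 1 then (0,1,0) else (0,0,1))"

definition pd :: "(pt \<Rightarrow> 'b::real_normed_vector) \<Rightarrow> pt \<Rightarrow> nat \<Rightarrow> 'b" where
  "pd f p \<mu> = pdir f (edir \<mu>) p"

definition eps :: "nat \<Rightarrow> nat \<Rightarrow> real" where
  "eps a b = (if a = 1 \<and> b = 2 then 1 else if a = 2 \<and> b = 1 then -1 else 0)"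

definition tauL :: "nat \<Rightarrow> pt \<Rightarrow> real" where
  "tauL \<mu> p = (if \<mu> = 0 then 1 else 0)"

definition eL :: "(real \<times> real \<Rightarrow> real) \<Rightarrow> nat \<Rightarrow> nat \<Rightarrow> pt \<Rightarrow> real" where
  "eL lam \<mu> a p = (if \<mu> = a \<and> a \<in> {1,2} then exp (lam (snd p)) else 0)"

definition mL :: "nat \<Rightarrow> pt \<Rightarrow> real" where
  "mL \<mu> p = 0"

text \<open>Projective inverses \<open>\<tau>^\<mu>\<close>, \<open>e^\<mu>_a\<close> of this background.\<close>
definition tauU :: "nat \<Rightarrow> pt \<Rightarrow> real" where
  "tauU \<mu> p = (if \<mu> = 0 then 1 else 0)"

definition eU :: "(real \<times> real \<Rightarrow> real) \<Rightarrow> nat \<Rightarrow> nat \<Rightarrow> pt \<Rightarrow> real" where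
  "eU lam \<mu> a p = (if \<mu> = a \<and> a \<in> {1,2} then exp (- lam (snd p)) else 0)"

definition tau2 :: "nat \<Rightarrow> nat \<Rightarrow> pt \<Rightarrow> real" where
  "tau2 \<mu> \<nu> p = pd (tauL \<nu>) p \<mu> - pd (tauL \<mu>) p \<nu>"

definition tau_ab :: "(real \<times> real \<Rightarrow> real) \<Rightarrow> nat \<Rightarrow> nat \<Rightarrow> pt \<Rightarrow> real" where
  "tau_ab lam a b p = (\<Sum>\<mu>\<in>{0..2}. \<Sum>\<nu>\<in>{0..2}. eU lam \<mu> a p * eU lam \<nu> b p * tau2 \<mu> \<nu> p)"

definition tau_0 :: "nat \<Rightarrow> pt \<Rightarrow> real" where
  "tau_0 \<mu> p = (\<Sum>\<nu>\<in>{0..2}. tauU \<nu> p * tau2 \<nu> \<mu> p)"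

definition tau_a :: "(real \<times> real \<Rightarrow> real) \<Rightarrow> nat \<Rightarrow> nat \<Rightarrow> pt \<Rightarrow> real" where
  "tau_a lam \<mu> a p = (\<Sum>\<nu>\<in>{0..2}. tau2 \<mu> \<nu> p * eU lam \<nu> a p)"

definition de_as :: "(real \<times> real \<Rightarrow> real) \<Rightarrow> nat \<Rightarrow> nat \<Rightarrow> nat \<Rightarrow> pt \<Rightarrow> real" where
  "de_as lam \<mu> \<nu> b p = (pd (eL lam \<nu> b) p \<mu> - pd (eL lam \<mu> b) p \<nu>) / 2"

definition dm_as :: "nat \<Rightarrow> nat \<Rightarrow> pt \<Rightarrow> real" where
  "dm_as \<mu> \<nu> p = (pd (mL \<nu>) p \<mu> - pd (mL \<mu>) p \<nu>) / 2"

definition spin :: "(real \<times> real \<Rightarrow> real) \<Rightarrow> nat \<Rightarrow> nat \<Rightarrow> nat \<Rightarrow> pt \<Rightarrow> real" where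
  "spin lam \<mu> a b p =
     (\<Sum>\<nu>\<in>{0..2}. eU lam \<nu> a p * de_as lam \<mu> \<nu> b p - eU lam \<nu> b p * de_as lam \<mu> \<nu> a p)
   - (\<Sum>c\<in>{1..2}. \<Sum>\<nu>\<in>{0..2}. \<Sum>\<rho>\<in>{0..2}.
        eL lam \<mu> c p * eU lam \<nu> a p * eU lam \<rho> b p * de_as lam \<nu> \<rho> c p)
   - (\<Sum>\<nu>\<in>{0..2}. \<Sum>\<rho>\<in>{0..2}. tauL \<mu> p * eU lam \<nu> a p * eU lam \<rho> b p * dm_as \<nu> \<rho> p)"

definition omg :: "(real \<times> real \<Rightarrow> real) \<Rightarrow> nat \<Rightarrow> pt \<Rightarrow> real" where
  "omg lam a p = (\<Sum>b\<in>{1..2}. 2 * eps a b * exp (- lam (snd p)) * pd (\<lambda>q. lam (snd q)) p b)"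

definition Yv :: "(nat \<Rightarrow> real) \<Rightarrow> nat \<Rightarrow> real" where
  "Yv X a = (\<Sum>b\<in>{1..2}. eps a b * X b)"

definition vS :: "pt \<Rightarrow> real" where "vS p = 0"
definition v0 :: "pt \<Rightarrow> real" where "v0 p = 0"
definition va :: "(real \<times> real \<Rightarrow> real) \<Rightarrow> nat \<Rightarrow> pt \<Rightarrow> real" where
  "va lam a p = omg lam a p / 2"

definition vmu :: "(real \<times> real \<Rightarrow> real) \<Rightarrow> nat \<Rightarrow> pt \<Rightarrow> real" where
  "vmu lam \<mu> p = tauL \<mu> p * v0 p + (\<Sum>a\<in>{1..2}. eL lam \<mu> a p * va lam a p)"

definition reU :: "(real \<times> real \<Rightarrow> real) \<Rightarrow> (nat \<Rightarrow> real) \<Rightarrow> pt \<Rightarrow> real" where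
  "reU lam X p = - (\<Sum>a\<in>{1..2}. Yv X a * omg lam a p) / 2"

definition imU :: "(real \<times> real \<Rightarrow> real) \<Rightarrow> (nat \<Rightarrow> real) \<Rightarrow> pt \<Rightarrow> real" where
  "imU lam X p = - (\<Sum>a\<in>{1..2}. X a * omg lam a p) / 2"

definition uF :: "(real \<times> real \<Rightarrow> real) \<Rightarrow> (nat \<Rightarrow> real) \<Rightarrow> pt \<Rightarrow> complex" where
  "uF lam X p = Complex (reU lam X p) (imU lam X p)"

section \<open>Gamma matrices (a real Majorana representation)\<close>

type_synonym spinor = "complex ^ 2"
type_synonym cmat = "complex ^ 2 ^ 2"

definition mk2 :: "complex \<Rightarrow> complex \<Rightarrow> complex \<Rightarrow> complex \<Rightarrow> cmat" where
  "mk2 a b c d = (\<chi> i j. if i = 1 then (if j = 1 then a else b) else (if j = 1 then c else d))"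

text \<open>\<open>\<gamma>_1 = \<sigma>_1\<close>, \<open>\<gamma>_2 = \<sigma>_3\<close>, \<open>\<gamma>_0 = \<gamma>_1\<gamma>_2\<close>.\<close>
definition gam :: "nat \<Rightarrow> cmat" where
  "gam k = (if k = 0 then mk2 0 (-1) 1 0 else if k = 1 then mk2 0 1 1 0 else mk2 1 0 0 (-1))"

text \<open>Raised indices: \<open>\<gamma>^0 = -\<gamma>_0\<close>, \<open>\<gamma>^a = \<gamma>_a\<close>.\<close>
definition gamU :: "nat \<Rightarrow> cmat" where
  "gamU k = (if k = 0 then - gam 0 else gam k)"

definition gam2 :: "nat \<Rightarrow> nat \<Rightarrow> cmat" where
  "gam2 A B = (\<chi> i j. ((gam A ** gam B) $ i $ j - (gam B ** gam A) $ i $ j) / 2)"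

definition C3 :: cmat where
  "C3 = (\<chi> i j. - \<i> * gam 0 $ i $ j)"

definition majorana :: "spinor \<Rightarrow> bool" where
  "majorana z \<longleftrightarrow> (\<chi> i. cnj (z $ i)) = \<i> *s (C3 *v (gamU 0 *v z))"

definition Dcov :: "(real \<times> real \<Rightarrow> real) \<Rightarrow> (pt \<Rightarrow> spinor) \<Rightarrow> nat \<Rightarrow> pt \<Rightarrow> spinor" where
  "Dcov lam z \<mu> p = pd z p \<mu> +
     (\<Sum>a\<in>{1..2}. \<Sum>b\<in>{1..2}. (spin lam \<mu> a b p / 4) *\<^sub>R (gam2 a b *v z p))"

definition Sminus_at :: "(real \<times> real \<Rightarrow> real) \<Rightarrow> (nat \<Rightarrow> real) \<Rightarrow> (pt \<Rightarrow> spinor) \<Rightarrow> pt \<Rightarrow> bool" where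
  "Sminus_at lam X z p \<longleftrightarrow>
     ((4/3 * vS p - (\<Sum>a\<in>{1..2}. \<Sum>b\<in>{1..2}. eps a b * tau_ab lam a b p)) *\<^sub>R (gam 0 *v z p) = 0)
   \<and> (\<forall>\<mu>\<in>{0..2}.
       (\<Sum>a\<in>{1..2}. (3/2 * tau_a lam \<mu> a p) *\<^sub>R (gam2 a 0 *v z p))
     + (\<Sum>a\<in>{1..2}. (eL lam \<mu> a p * vS p) *\<^sub>R (gam a *v z p))
     + (\<Sum>a\<in>{1..2}. (tauL \<mu> p * va lam a p) *\<^sub>R (gam a *v z p))
     + (reU lam X p * tauL \<mu> p) *\<^sub>R (gam 0 *v z p)
     + (imU lam X p * tauL \<mu> p) *\<^sub>R z p = 0)
   \<and> (\<forall>\<mu>\<in>{0..2}. Dcov lam z \<mu> p =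
       (tau_0 \<mu> p / 4) *\<^sub>R z p
     + (vmu lam \<mu> p / 2) *\<^sub>R (gam 0 *v z p)
     - (\<Sum>a\<in>{1..2}. \<Sum>b\<in>{1..2}. (eL lam \<mu> a p * va lam b p / 6) *\<^sub>R
           ((gam a ** gamU b ** gam 0) *v z p))
     - (\<Sum>a\<in>{1..2}. (reU lam X p * eL lam \<mu> a p / 6) *\<^sub>R (gam a *v z p))
     + (\<Sum>a\<in>{1..2}. (imU lam X p * eL lam \<mu> a p / 6) *\<^sub>R (gam2 a 0 *v z p)))"

definition solves_Sminus :: "(real \<times> real \<Rightarrow> real) \<Rightarrow> (nat \<Rightarrow> real) \<Rightarrow> pt set \<Rightarrow> (pt \<Rightarrow> spinor) \<Rightarrow> bool" where
  "solves_Sminus lam X S z \<longleftrightarrow> smooth_on S z \<and> (\<forall>p\<in>S. majorana (z p) \<and> Sminus_at lam X z p)"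

end

theory Submission
  imports Defs
begin

text \<open>For this background the torsion \<open>\<tau>_{\<mu>\<nu>}\<close> and \<open>\<partial>_{[\<mu>}m_{\<nu>]}\<close> vanish and the only
  non-zero spin-connection components are \<open>\<omega>_1{}^{12} = \<partial>_2\<lambda>\<close>, \<open>\<omega>_2{}^{12} = -\<partial>_1\<lambda>\<close>.
  For a constant real spinor \<open>(c\<^sub>1, c\<^sub>2)\<close> every equation of (S\<open>_-\<close>) then reduces to an
  algebraic identity, and the terms in \<open>\<partial>\<lambda>\<close> cancel as soon as
  \<open>X\<^sub>1c\<^sub>1 = (1 + X\<^sub>2)c\<^sub>2\<close> and \<open>X\<^sub>1c\<^sub>2 = (1 - X\<^sub>2)c\<^sub>1\<close>; since \<open>X\<close> is a unit vector this
  system has rank one, so it has a non-zero solution. If \<open>u = 0\<close> on \<open>V\<close>, then \<open>\<omega>\<close>, hence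
  \<open>d\<lambda>\<close>, vanishes on \<open>V\<close> and every constant real spinor is a solution.\<close>

abbreviation dlam :: "(real \<times> real \<Rightarrow> real) \<Rightarrow> pt \<Rightarrow> nat \<Rightarrow> real" where
  "dlam lam p \<mu> \<equiv> pd (\<lambda>q. lam (snd q)) p \<mu>"

abbreviation real_spinor :: "real \<Rightarrow> real \<Rightarrow> spinor" where
  "real_spinor c1 c2 \<equiv> vector [complex_of_real c1, complex_of_real c2]"

lemma pd_const [simp]: "pd (\<lambda>_. c) p \<mu> = 0"
  by (simp add: pd_def pdir_def)

lemma dlam_time: "dlam lam p 0 = 0"
  by (simp add: pd_def pdir_def edir_def)

lemma smooth_on_differentiable_at_basis:
  assumes "smooth_on S f" "p \<in> S" "b \<in> Basis"
  shows "(\<lambda>s. f (p + s *\<^sub>R b)) differentiable (at 0)"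
  using assms unfolding smooth_on_def by (metis iter_pd.simps(1) empty_subsetI empty_set)

lemma has_real_derivative_dlam:
  fixes lam :: "real \<times> real \<Rightarrow> real"
  assumes "smooth_on U lam" "snd p \<in> U"
  shows "((\<lambda>s. lam (snd (p + s *\<^sub>R edir \<mu>))) has_real_derivative dlam lam p \<mu>) (at 0)"
proof -
  have "(\<lambda>s. lam (snd (p + s *\<^sub>R edir \<mu>))) differentiable (at 0)"
  proof (cases "\<mu> = 0")
    case False
    then have "snd (edir \<mu>) \<in> Basis"
      by (auto simp: edir_def Basis_prod_def)
    from smooth_on_differentiable_at_basis[OF assms this] show ?thesis by simp
  qed (simp add: edir_def)
  then show ?thesis unfolding pd_def pdir_def
    by (simp add: vector_derivative_works has_real_derivative_iff_has_vector_derivative)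
qed

lemma pd_exp_lam:
  fixes lam :: "real \<times> real \<Rightarrow> real"
  assumes "smooth_on U lam" "snd p \<in> U"
  shows "pd (\<lambda>q. exp (lam (snd q))) p \<mu> = exp (lam (snd p)) * dlam lam p \<mu>"
  using DERIV_fun_exp[OF has_real_derivative_dlam[OF assms, of \<mu>]] unfolding pd_def pdir_def
  by (simp add: has_real_derivative_iff_has_vector_derivative vector_derivative_at)

lemma pd_eL:
  fixes lam :: "real \<times> real \<Rightarrow> real"
  assumes "smooth_on U lam" "snd p \<in> U"
  shows "pd (eL lam \<nu> b) p \<mu> =
           (if \<nu> = b \<and> b \<in> {1,2} then exp (lam (snd p)) * dlam lam p \<mu> else 0)"
proof (cases "\<nu> = b \<and> b \<in> {1,2}")
  case True
  then have "eL lam \<nu> b = (\<lambda>q. exp (lam (snd q)))" by (auto simp: eL_def)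
  with True show ?thesis using pd_exp_lam[OF assms] by simp
next
  case False
  then have "eL lam \<nu> b = (\<lambda>q. 0)" by (auto simp: eL_def fun_eq_iff)
  then show ?thesis by (simp only: if_not_P[OF False] pd_const)
qed

lemma tau2_eq_0 [simp]: "tau2 \<mu> \<nu> p = 0"
proof -
  have "tauL k = (\<lambda>_. if k = 0 then 1 else 0)" for k by (auto simp: tauL_def fun_eq_iff)
  then show ?thesis by (simp add: tau2_def)
qed

lemma dm_as_eq_0 [simp]: "dm_as \<mu> \<nu> p = 0"
  by (simp add: dm_as_def mL_def [abs_def])

lemma torsion_components_eq_0 [simp]:
  "tau_ab lam a b p = 0" "tau_0 \<mu> p = 0" "tau_a lam \<mu> a p = 0"
  by (simp_all add: tau_ab_def tau_0_def tau_a_def)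

lemma index_ranges: "{0..2::nat} = {0,1,2}" "{1..2::nat} = {1,2}"
  by auto

lemma spin_eq:
  fixes lam :: "real \<times> real \<Rightarrow> real"
  assumes "smooth_on U lam" "snd p \<in> U" "\<mu> \<in> {0,1,2}"
  shows "spin lam \<mu> 1 2 p =
           (if \<mu> = 1 then dlam lam p 2 else if \<mu> = 2 then - dlam lam p 1 else 0)"
    and "spin lam \<mu> 2 1 p =
           - (if \<mu> = 1 then dlam lam p 2 else if \<mu> = 2 then - dlam lam p 1 else 0)"
    and "spin lam \<mu> 1 1 p = 0" "spin lam \<mu> 2 2 p = 0"
  using assms(3) unfolding spin_def index_ranges
  by (auto simp: de_as_def pd_eL[OF assms(1,2)] dlam_time eU_def eL_def exp_minus
      field_simps tauL_def)

lemma omg_eq: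
  "omg lam 1 p = 2 * exp (- lam (snd p)) * dlam lam p 2"
  "omg lam 2 p = - 2 * exp (- lam (snd p)) * dlam lam p 1"
  unfolding omg_def index_ranges by (simp_all add: eps_def)

lemma gam_mult_vec:
  "gam 0 *v z = vector [- z$2, z$1]"
  "gam 1 *v z = vector [z$2, z$1]"
  "gam 2 *v z = vector [z$1, - z$2]"
  "(- gam 0) *v z = vector [z$2, - z$1]"
  by (auto simp: vec_eq_iff forall_2 matrix_vector_mult_def sum_2 gam_def mk2_def vector_def)

lemma gam2_eq:
  "gam2 1 0 = gam 1 ** gam 0" "gam2 2 0 = gam 2 ** gam 0"
  "gam2 1 2 = gam 0" "gam2 2 1 = - gam 0" "gam2 1 1 = 0" "gam2 2 2 = 0"
  by (auto simp: vec_eq_iff forall_2 matrix_matrix_mult_def sum_2 gam_def mk2_def gam2_def)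

lemma Sminus_at_real_spinor:
  fixes lam :: "real \<times> real \<Rightarrow> real"
  assumes "smooth_on U lam" "snd p \<in> U"
    and "(X 1 * c1 = (1 + X 2) * c2 \<and> X 1 * c2 = (1 - X 2) * c1)
         \<or> (dlam lam p 1 = 0 \<and> dlam lam p 2 = 0)"
  shows "Sminus_at lam X (\<lambda>_. real_spinor c1 c2) p"
proof -
  note simps = spin_eq[OF assms(1,2)] gam_mult_vec gam2_eq gamU_def omg_eq
  show ?thesis
    unfolding Sminus_at_def Dcov_def va_def vmu_def reU_def imU_def Yv_def vS_def v0_def
      index_ranges
    apply (simp add: simps simps[unfolded One_nat_def] matrix_vector_mul_assoc[symmetric]
        eps_def tauL_def eL_def)
    apply (simp add: gam_mult_vec vec_eq_iff forall_2 complex_eq_iff)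
    using assms(3)[unfolded One_nat_def] exp_minus_inverse[of "lam (snd p)"]
    by (elim disjE conjE) algebra+
qed

lemma majorana_real_spinor: "majorana (real_spinor c1 c2)"
  by (auto simp: majorana_def vec_eq_iff forall_2 matrix_vector_mult_def sum_2 gam_def mk2_def
      gamU_def C3_def)

lemma iter_pd_const: "iter_pd bs (\<lambda>_. c) = (\<lambda>_. if bs = [] then c else 0)"
  by (induction bs) (auto simp: pdir_def)

lemma smooth_on_const: "smooth_on S (\<lambda>_. c)"
  unfolding smooth_on_def iter_pd_const by auto

lemma real_spinor_eq_0_iff: "real_spinor c1 c2 = 0 \<longleftrightarrow> c1 = 0 \<and> c2 = 0"
  by (auto simp: vec_eq_iff forall_2)

lemma solves_Sminus_real_spinor:
  assumes "smooth_on U lam" "V \<subseteq> U"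
    and "\<And>p. p \<in> UNIV \<times> V \<Longrightarrow>
           (X 1 * c1 = (1 + X 2) * c2 \<and> X 1 * c2 = (1 - X 2) * c1)
         \<or> (dlam lam p 1 = 0 \<and> dlam lam p 2 = 0)"
  shows "solves_Sminus lam X (UNIV \<times> V) (\<lambda>_. real_spinor c1 c2)"
  using Sminus_at_real_spinor[OF assms(1) _ assms(3)] assms(2)
  by (auto simp: solves_Sminus_def smooth_on_const majorana_real_spinor)

lemma unit_vector_kernel:
  fixes x y :: real
  assumes "x\<^sup>2 + y\<^sup>2 = 1"
  obtains c1 c2 where "x * c1 = (1 + y) * c2" "x * c2 = (1 - y) * c1" "c1 \<noteq> 0 \<or> c2 \<noteq> 0"
proof (cases "y = -1")
  case True
  with assms have "x = 0" by simp
  with True show ?thesis by (intro that[of 0 1]) auto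
next
  case False
  have "(1 - y) * (1 + y) = x * x" using assms by (simp add: algebra_simps power2_eq_square)
  with False show ?thesis by (intro that[of "1 + y" x]) (auto simp: algebra_simps)
qed

lemma dlam_eq_0_if_uF_eq_0:
  fixes lam :: "real \<times> real \<Rightarrow> real"
  assumes "(X 1)\<^sup>2 + (X 2)\<^sup>2 = 1" "uF lam X p = 0"
  shows "dlam lam p 1 = 0 \<and> dlam lam p 2 = 0"
proof -
  define l1 where "l1 = dlam lam p 1"
  define l2 where "l2 = dlam lam p 2"
  have "reU lam X p = 0" "imU lam X p = 0"
    using assms(2) by (auto simp: uF_def complex_eq_iff)
  then have "exp (- lam (snd p)) * (X 2 * l2 + X 1 * l1) = 0"
    and "exp (- lam (snd p)) * (X 1 * l2 - X 2 * l1) = 0"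
    unfolding reU_def imU_def Yv_def index_ranges l1_def l2_def
    by (simp_all add: omg_eq omg_eq[unfolded One_nat_def] eps_def algebra_simps)
  then have rot: "X 2 * l2 + X 1 * l1 = 0" "X 1 * l2 - X 2 * l1 = 0"
    by auto
  have "l1 = l1 * ((X 1)\<^sup>2 + (X 2)\<^sup>2)" using assms(1) by simp
  also have "\<dots> = X 1 * (X 2 * l2 + X 1 * l1) - X 2 * (X 1 * l2 - X 2 * l1)"
    by (simp add: algebra_simps power2_eq_square)
  finally have "l1 = 0" using rot by simp
  have "l2 = l2 * ((X 1)\<^sup>2 + (X 2)\<^sup>2)" using assms(1) by simp
  also have "\<dots> = X 2 * (X 2 * l2 + X 1 * l1) + X 1 * (X 1 * l2 - X 2 * l1)"
    by (simp add: algebra_simps power2_eq_square)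
  finally have "l2 = 0" using rot by simp
  with \<open>l1 = 0\<close> show ?thesis unfolding l1_def l2_def ..
qed

theorem mainTheorem7:
  fixes lam :: "real \<times> real \<Rightarrow> real" and U :: "(real \<times> real) set" and X :: "nat \<Rightarrow> real"
  assumes "open U"
    and "smooth_on U lam"
    and "(X 1)\<^sup>2 + (X 2)\<^sup>2 = 1"
  shows "(\<exists>z. solves_Sminus lam X (UNIV \<times> U) z \<and> (\<forall>p\<in>UNIV \<times> U. z p \<noteq> 0))
       \<and> (\<forall>V. open V \<and> V \<subseteq> U \<and> (\<forall>p\<in>UNIV \<times> V. uF lam X p = 0) \<longrightarrow>
            (\<exists>z1 z2. solves_Sminus lam X (UNIV \<times> V) z1 \<and> solves_Sminus lam X (UNIV \<times> V) z2
               \<and> (\<forall>p\<in>UNIV \<times> V. z1 p \<noteq> 0 \<and> z2 p \<noteq> 0)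
               \<and> (\<forall>p\<in>UNIV \<times> V. \<forall>c1 c2 :: complex.
                     c1 *s z1 p + c2 *s z2 p = 0 \<longrightarrow> c1 = 0 \<and> c2 = 0)))"
proof (intro conjI allI impI; (elim conjE)?)
  obtain c1 c2
    where "X 1 * c1 = (1 + X 2) * c2" "X 1 * c2 = (1 - X 2) * c1" "c1 \<noteq> 0 \<or> c2 \<noteq> 0"
    using unit_vector_kernel[OF assms(3)] .
  then show "\<exists>z. solves_Sminus lam X (UNIV \<times> U) z \<and> (\<forall>p\<in>UNIV \<times> U. z p \<noteq> 0)"
    using solves_Sminus_real_spinor[OF assms(2) order_refl, of X c1 c2]
    by (intro exI[of _ "\<lambda>_. real_spinor c1 c2"]) (simp add: real_spinor_eq_0_iff)
next
  fix V
  assume "V \<subseteq> U" and "\<forall>p\<in>UNIV \<times> V. uF lam X p = 0"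
  then have solves: "solves_Sminus lam X (UNIV \<times> V) (\<lambda>_. real_spinor c1 c2)" for c1 c2
    using dlam_eq_0_if_uF_eq_0[OF assms(3)]
    by (intro solves_Sminus_real_spinor[OF assms(2)]) auto
  have independent: "c1 *s real_spinor 1 0 + c2 *s real_spinor 0 1 = 0 \<Longrightarrow> c1 = 0 \<and> c2 = 0"
    for c1 c2 :: complex
    by (simp add: vec_eq_iff forall_2)
  show "\<exists>z1 z2. solves_Sminus lam X (UNIV \<times> V) z1 \<and> solves_Sminus lam X (UNIV \<times> V) z2
               \<and> (\<forall>p\<in>UNIV \<times> V. z1 p \<noteq> 0 \<and> z2 p \<noteq> 0)
               \<and> (\<forall>p\<in>UNIV \<times> V. \<forall>c1 c2 :: complex.
                     c1 *s z1 p + c2 *s z2 p = 0 \<longrightarrow> c1 = 0 \<and> c2 = 0)"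
    using solves[of 1 0] solves[of 0 1] independent
      real_spinor_eq_0_iff[of 1 0] real_spinor_eq_0_iff[of 0 1]
    by (intro exI[of _ "\<lambda>_. real_spinor 1 0", OF exI[of _ "\<lambda>_. real_spinor 0 1"]]) simp
qed

end
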